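(* Let $\mathbb{F}_q$ be a finite field, $\mathbb{P}$ a poset on $[n]=\{1,\dots,n\}$, and let $\mathcal{C}\subseteq\mathbb{F}_q^n$ be a linear MDS $\mathbb{P}$-code with parameters $[n,k,d=n-k+1]$, i.e. a linear $[n,k]$ code with $d=d_1^{\mathbb{P}}(\mathcal{C})=n-k+1$. Then, for every $r$ with $d\le r\le n$, $$\mathcal{A}_{r,\mathbb{P}}(\mathcal{C})=\sum_{I\in\Lambda^r(\mathbb{P})}\ \sum_{s=0}^{r-d}(-1)^s\binom{|M(I)|}{s}\left(q^{r-d+1-s}-1\right).$$
   Context: A subset $I\subseteq[n]$ is an ideal of $\mathbb{P}$ if $j\in I$ and $i\le_{\mathbb{P}}j$ imply $i\in I$. $\Lambda^r(\mathbb{P})$ is the set of ideals of $\mathbb{P}$ of size $r$, and $M(I)$ is the set of maximal elements (with respect to $\le_{\mathbb{P}}$) of $I$. For $u\in\mathbb{F}_q^n$, $\mathrm{supp}(u)=\{i:u_i\ne0\}$ and the $\mathbb{P}$-weight is $w_{\mathbb{P}}(u)=|\{i:i\le_{\mathbb{P}}j\text{ for some }j\in\mathrm{supp}(u)\}|$; for a subspace $D$, $w_{\mathbb{P}}(D)$ is the size of the smallest ideal containing $\bigcup_{u\in D}\mathrm{supp}(u)$. $d_1^{\mathbb{P}}(\mathcal{C})=\min\{w_{\mathbb{P}}(D): D \text{ a 1-dimensional subspace of }\mathcal{C}\}$ (the minimum $\mathbb{P}$-weight of a nonzero codeword). $\mathcal{A}_{r,\mathbb{P}}(\mathcal{C})=|\{u\in\mathcal{C}:w_{\mathbb{P}}(u)=r\}|$.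 *)

theory Defs
  imports "HOL-Analysis.Analysis"
begin

text \<open>A poset on the index set (the finite type 'n, with CARD('n) = n) is a
  relation P (pairs (i,j) meaning i \<le>_P j) with partial_order_on UNIV P.\<close>

definition is_ideal :: "('n \<times> 'n) set \<Rightarrow> 'n set \<Rightarrow> bool" where
  "is_ideal P I \<longleftrightarrow> (\<forall>j\<in>I. \<forall>i. (i, j) \<in> P \<longrightarrow> i \<in> I)"

definition ideals_of_size :: "('n \<times> 'n) set \<Rightarrow> nat \<Rightarrow> 'n set set" where
  "ideals_of_size P r = {I. is_ideal P I \<and> card I = r}"

definition maximal_elems :: "('n \<times> 'n) set \<Rightarrow> 'n set \<Rightarrow> 'n set" where
  "maximal_elems P I = {j \<in> I. \<forall>i\<in>I. (j, i) \<in> P \<longrightarrow> i = j}"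

definition supp :: "'a::zero ^ 'n \<Rightarrow> 'n set" where
  "supp u = {i. u $ i \<noteq> 0}"

definition ideal_hull :: "('n \<times> 'n) set \<Rightarrow> 'n set \<Rightarrow> 'n set" where
  "ideal_hull P A = {i. \<exists>j\<in>A. (i, j) \<in> P}"

definition pweight :: "('n \<times> 'n) set \<Rightarrow> 'a::zero ^ 'n \<Rightarrow> nat" where
  "pweight P u = card (ideal_hull P (supp u))"

definition min_pweight :: "('n \<times> 'n) set \<Rightarrow> ('a::zero ^ 'n) set \<Rightarrow> nat" where
  "min_pweight P C = Min {pweight P u | u. u \<in> C \<and> u \<noteq> 0}"

definition weight_count :: "nat \<Rightarrow> ('n \<times> 'n) set \<Rightarrow> ('a::zero ^ 'n) set \<Rightarrow> nat" where
  "weight_count r P C = card {u \<in> C. pweight P u = r}"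

end

theory Submission
  imports Defs
begin

text \<open>Write \<open>C\<^sub>J\<close> for the subcode of codewords supported in \<open>J\<close>. For every ideal \<open>J\<close> of an MDS
  \<open>\<P>\<close>-code, \<open>|C\<^sub>J| = q^(|J| - (n - k))\<close> (truncated subtraction). Deleting the coordinates of
  \<open>J\<close> maps \<open>C\<close> onto at most \<open>q^(n - |J|)\<close> words with fibres that are cosets of \<open>C\<^sub>J\<close>,
  which gives \<open>\<ge>\<close>. Conversely an ideal of size \<open>\<ge> n - k\<close> contains an ideal \<open>J'\<close> of size
  exactly \<open>n - k < d\<close>, on which only \<open>0\<close> is supported, so deleting the coordinates outside
  \<open>J - J'\<close> is injective on \<open>C\<^sub>J\<close>.

  A codeword has \<open>\<P>\<close>-weight \<open>r\<close> iff the ideal generated by its support is some \<open>I\<close> of size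
  \<open>r\<close>, i.e. iff its support lies in \<open>I\<close> and contains \<open>M(I)\<close>. Removing a maximal element
  from an ideal leaves an ideal, so inclusion-exclusion over \<open>M(I)\<close> expresses this count as
  \<open>\<Sum>\<^sub>s (-1)^s (|M(I)| choose s) q^(r-d+1-s)\<close>; as \<open>\<Sum>\<^sub>s (-1)^s (m choose s) = 0\<close>, each power may be
  replaced by \<open>q^(r-d+1-s) - 1\<close>, and the terms with \<open>s > r - d\<close> then vanish.\<close>

lemma card_subspace:
  fixes C :: "('a::{finite,field} ^ 'n::finite) set"
  assumes "vec.subspace C"
  shows "card C = CARD('a) ^ vec.dim C"
proof -
  obtain B where B: "B \<subseteq> C" "vec.independent B" "C \<subseteq> vec.span B" "card B = vec.dim C"
    using vec.basis_exists by blast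
  have fB: "finite B" by simp
  have CB: "vec.span B = C" using vec.span_subspace[OF B(1) B(3) assms] .
  let ?comb = "\<lambda>f. \<Sum>v\<in>B. f v *s v"
  have bij: "bij_betw ?comb (B \<rightarrow>\<^sub>E (UNIV::'a set)) C"
  proof (rule bij_betwI')
    fix f g :: "'a^'n \<Rightarrow> 'a" assume f: "f \<in> B \<rightarrow>\<^sub>E UNIV" and g: "g \<in> B \<rightarrow>\<^sub>E UNIV"
    show "(?comb f = ?comb g) = (f = g)"
    proof
      assume eq: "?comb f = ?comb g"
      have "(\<Sum>v\<in>B. (f v - g v) *s v) = ?comb f - ?comb g"
        by (simp only: vec.scale_left_diff_distrib sum_subtractf)
      also have "\<dots> = 0" using eq by simp
      finally have z: "(\<Sum>v\<in>B. (f v - g v) *s v) = 0" .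
      have "\<forall>v\<in>B. f v - g v = 0"
      proof (rule ccontr)
        assume "\<not> (\<forall>v\<in>B. f v - g v = 0)"
        then obtain v where v: "v \<in> B" "f v - g v \<noteq> 0" by blast
        have "\<exists>u. (\<exists>v\<in>B. u v \<noteq> 0) \<and> (\<Sum>v\<in>B. u v *s v) = 0"
          using v z by (intro exI[of _ "\<lambda>v. f v - g v"]) blast
        hence "vec.dependent B" by (rule iffD2[OF vec.dependent_finite[OF fB]])
        thus False using B(2) by simp
      qed
      thus "f = g" by (intro PiE_ext[OF f g]) simp
    qed simp
  next
    fix f :: "'a^'n \<Rightarrow> 'a" assume "f \<in> B \<rightarrow>\<^sub>E UNIV"
    have "?comb f \<in> range (\<lambda>u. \<Sum>v\<in>B. u v *s v)" by (rule rangeI)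
    thus "?comb f \<in> C" unfolding vec.span_finite[OF fB, symmetric] CB .
  next
    fix y assume "y \<in> C"
    hence "y \<in> range (\<lambda>u. \<Sum>v\<in>B. u v *s v)" using CB vec.span_finite[OF fB] by simp
    then obtain u where u: "y = ?comb u" by blast
    have "?comb u = ?comb (restrict u B)" by (rule sum.cong) auto
    thus "\<exists>x\<in>B \<rightarrow>\<^sub>E UNIV. y = ?comb x"
      using u by (intro bexI[of _ "restrict u B"]) auto
  qed
  have "card C = card (B \<rightarrow>\<^sub>E (UNIV::'a set))" using bij_betw_same_card[OF bij] by simp
  also have "\<dots> = CARD('a) ^ card B" by (simp add: card_PiE)
  finally show ?thesis using B(4) by simp
qed

lemma card_supp_subset:
  "card {v :: 'a::{finite,zero} ^ 'n::finite. supp v \<subseteq> B} = CARD('a) ^ card B"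
proof -
  have "bij_betw (\<lambda>v. restrict (vec_nth v) B) {v :: 'a ^ 'n. supp v \<subseteq> B} (B \<rightarrow>\<^sub>E UNIV)"
  proof (rule bij_betwI')
    fix x y :: "'a ^ 'n" assume "x \<in> {v. supp v \<subseteq> B}" "y \<in> {v. supp v \<subseteq> B}"
    then have "\<forall>i. i \<notin> B \<longrightarrow> x $ i = 0 \<and> y $ i = 0" by (auto simp: supp_def)
    then show "(restrict (($) x) B = restrict (($) y) B) = (x = y)"
      by (auto simp: vec_eq_iff restrict_def fun_eq_iff)
  next
    fix f :: "'n \<Rightarrow> 'a" assume "f \<in> B \<rightarrow>\<^sub>E UNIV"
    then have "f = restrict (($) (\<chi> i. if i \<in> B then f i else 0)) B"
      by (auto simp: restrict_def fun_eq_iff PiE_iff extensional_def)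
    moreover have "(\<chi> i. if i \<in> B then f i else 0) \<in> {v. supp v \<subseteq> B}"
      by (auto simp: supp_def)
    ultimately show "\<exists>x\<in>{v. supp v \<subseteq> B}. f = restrict (($) x) B" by blast
  qed simp
  then have "card {v :: 'a ^ 'n. supp v \<subseteq> B} = card (B \<rightarrow>\<^sub>E (UNIV::'a set))"
    by (rule bij_betw_same_card)
  then show ?thesis by (simp add: card_PiE)
qed

lemma card_field_ge_2: "2 \<le> CARD('a::{finite,field})"
proof -
  have "card {0::'a, 1} \<le> CARD('a)" by (rule card_mono) auto
  then show ?thesis by simp
qed

text \<open>The exponent \<open>e - s\<close> is truncated: terms with \<open>s \<ge> e\<close> contribute \<open>q^0\<close>.\<close>
definition alternating_binomial_sum :: "int \<Rightarrow> nat \<Rightarrow> nat \<Rightarrow> int" where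
  "alternating_binomial_sum q t e = (\<Sum>s\<le>t. (-1)^s * int (t choose s) * q^(e - s))"

lemma alternating_binomial_sum_0 [simp]: "alternating_binomial_sum q 0 e = q^e"
  by (simp add: alternating_binomial_sum_def)

lemma alternating_binomial_sum_Suc:
  "alternating_binomial_sum q (Suc t) e =
     alternating_binomial_sum q t e - alternating_binomial_sum q t (e - 1)"
proof -
  let ?term = "\<lambda>t s. (-1)^s * int (t choose s) * q^(e - s)"
  have "alternating_binomial_sum q (Suc t) e = q^e + (\<Sum>s\<le>t. ?term (Suc t) (Suc s))"
    unfolding alternating_binomial_sum_def by (subst sum.atMost_Suc_shift) simp
  also have "(\<Sum>s\<le>t. ?term (Suc t) (Suc s)) =
      (\<Sum>s\<le>t. ?term t (Suc s)) - (\<Sum>s\<le>t. (-1)^s * int (t choose s) * q^((e - 1) - s))"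
    unfolding sum_subtractf[symmetric]
    by (rule sum.cong[OF refl], simp only: binomial_Suc_Suc of_nat_add diff_Suc_eq_diff_pred)
      (simp add: algebra_simps)
  also have "q^e + \<dots> = (\<Sum>s\<le>Suc t. ?term t s) - alternating_binomial_sum q t (e - 1)"
    unfolding alternating_binomial_sum_def by (subst sum.atMost_Suc_shift) simp
  finally show ?thesis unfolding alternating_binomial_sum_def by simp
qed

lemma alternating_binomial_sum_eq_minus_one:
  assumes "m \<ge> 1" "e \<ge> 1"
  shows "alternating_binomial_sum q m e =
    (\<Sum>s=0..e-1. (-1)^s * int (m choose s) * (q^(e - s) - 1))"
proof -
  have "(\<Sum>s\<le>m. (-1)^s * int (m choose s)) = (0::int)"
    using assms choose_alternating_sum[of m] by simp
  then have "alternating_binomial_sum q m e = (\<Sum>s\<le>m. (-1)^s * int (m choose s) * (q^(e - s) - 1))"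
    unfolding alternating_binomial_sum_def by (simp add: right_diff_distrib sum_subtractf)
  also have "\<dots> = (\<Sum>s\<le>m+e. (-1)^s * int (m choose s) * (q^(e - s) - 1))"
    by (rule sum.mono_neutral_left) (auto simp: binomial_eq_0)
  also have "\<dots> = (\<Sum>s=0..e-1. (-1)^s * int (m choose s) * (q^(e - s) - 1))"
    by (rule sum.mono_neutral_right) (use assms in auto)
  finally show ?thesis .
qed

lemma po_refl: "partial_order_on UNIV P \<Longrightarrow> (i, i) \<in> P"
  using partial_order_onD(1) refl_onD by fastforce

lemma po_trans: "partial_order_on UNIV P \<Longrightarrow> (i, j) \<in> P \<Longrightarrow> (j, l) \<in> P \<Longrightarrow> (i, l) \<in> P"
  using partial_order_onD(2) transD by metis

lemma po_antisym: "partial_order_on UNIV P \<Longrightarrow> (i, j) \<in> P \<Longrightarrow> (j, i) \<in> P \<Longrightarrow> i = j"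
  using partial_order_onD(3) antisymD by metis

lemma is_ideal_ideal_hull: "partial_order_on UNIV P \<Longrightarrow> is_ideal P (ideal_hull P A)"
  unfolding is_ideal_def ideal_hull_def by (auto intro: po_trans)

lemma subset_ideal_hull: "partial_order_on UNIV P \<Longrightarrow> A \<subseteq> ideal_hull P A"
  unfolding ideal_hull_def by (auto intro: po_refl)

lemma ideal_hull_least: "is_ideal P J \<Longrightarrow> A \<subseteq> J \<Longrightarrow> ideal_hull P A \<subseteq> J"
  unfolding is_ideal_def ideal_hull_def by auto

lemma exists_maximal_elem_above:
  fixes P :: "('n::finite \<times> 'n) set"
  assumes po: "partial_order_on UNIV P" and "i \<in> I"
  shows "\<exists>m\<in>maximal_elems P I. (i, m) \<in> P"
proof -
  define S where "S = {j\<in>I. (i, j) \<in> P}"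
  define size where "size j = card (ideal_hull P {j})" for j
  have "i \<in> S" using \<open>i \<in> I\<close> po_refl[OF po] by (simp add: S_def)
  then obtain m where m: "m \<in> S" "size m = Max (size ` S)"
    using Max_in[of "size ` S"] by fastforce
  have "x = m" if x: "x \<in> I" "(m, x) \<in> P" for x
  proof (rule ccontr)
    assume "x \<noteq> m"
    with x(2) po_antisym[OF po] have "m \<notin> ideal_hull P {x} \<or> x \<notin> ideal_hull P {m}"
      by (auto simp: ideal_hull_def)
    moreover have "ideal_hull P {m} \<subseteq> ideal_hull P {x}" "x \<in> ideal_hull P {x}"
      using x(2) po_trans[OF po] po_refl[OF po] by (auto simp: ideal_hull_def)
    ultimately have "size m < size x"
      unfolding size_def using subset_ideal_hull[OF po, of "{m}"]
      by (intro psubset_card_mono) auto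
    moreover have "x \<in> S" using x m po_trans[OF po] by (auto simp: S_def)
    ultimately show False using m(2) by (simp add: leD)
  qed
  with m show ?thesis by (auto simp: S_def maximal_elems_def)
qed

lemma is_ideal_Diff_maximal_elem:
  assumes "partial_order_on UNIV P" "is_ideal P J" "m \<in> maximal_elems P J"
  shows "is_ideal P (J - {m})"
  using assms po_antisym[OF assms(1)] unfolding is_ideal_def maximal_elems_def by blast

lemma maximal_elems_Diff:
  "T \<subseteq> maximal_elems P J \<Longrightarrow> m \<notin> T \<Longrightarrow> T \<subseteq> maximal_elems P (J - {m})"
  unfolding maximal_elems_def by blast

lemma exists_subideal_of_card:
  fixes P :: "('n::finite \<times> 'n) set"
  assumes po: "partial_order_on UNIV P"
  shows "is_ideal P J \<Longrightarrow> t \<le> card J \<Longrightarrow> \<exists>J'\<subseteq>J. is_ideal P J' \<and> card J' = t"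
proof (induction "card J - t" arbitrary: J)
  case 0
  then show ?case by (intro exI[of _ J]) auto
next
  case (Suc x)
  then obtain i where "i \<in> J" by fastforce
  then obtain m where m: "m \<in> maximal_elems P J" using exists_maximal_elem_above[OF po] by blast
  then have "m \<in> J" by (simp add: maximal_elems_def)
  then have "x = card (J - {m}) - t" "t \<le> card (J - {m})" using Suc.hyps(2) by auto
  with Suc.hyps(1) is_ideal_Diff_maximal_elem[OF po Suc.prems(1) m]
  obtain J' where "J' \<subseteq> J - {m}" "is_ideal P J'" "card J' = t" by blast
  then show ?case by blast
qed

lemma ideal_hull_eq_iff:
  fixes P :: "('n::finite \<times> 'n) set"
  assumes po: "partial_order_on UNIV P" and I: "is_ideal P I"
  shows "ideal_hull P A = I \<longleftrightarrow> A \<subseteq> I \<and> maximal_elems P I \<subseteq> A"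
proof
  assume hull: "ideal_hull P A = I"
  then have "A \<subseteq> I" using subset_ideal_hull[OF po, of A] by simp
  moreover have "m \<in> A" if m: "m \<in> maximal_elems P I" for m
  proof -
    from m hull obtain j where "j \<in> A" "(m, j) \<in> P"
      by (auto simp: ideal_hull_def maximal_elems_def)
    with m \<open>A \<subseteq> I\<close> show ?thesis by (auto simp: maximal_elems_def)
  qed
  ultimately show "A \<subseteq> I \<and> maximal_elems P I \<subseteq> A" by blast
next
  assume A: "A \<subseteq> I \<and> maximal_elems P I \<subseteq> A"
  have "I \<subseteq> ideal_hull P A"
    using A exists_maximal_elem_above[OF po] by (fastforce simp: ideal_hull_def)
  with ideal_hull_least[OF I] A show "ideal_hull P A = I" by blast
qed

definition subcode_on :: "('a::zero ^ 'n) set \<Rightarrow> 'n set \<Rightarrow> ('a ^ 'n) set" where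
  "subcode_on C J = {u\<in>C. supp u \<subseteq> J}"

definition clear_coords :: "'n set \<Rightarrow> 'a::zero ^ 'n \<Rightarrow> 'a ^ 'n" where
  "clear_coords J u = (\<chi> i. if i \<in> J then 0 else u $ i)"

lemma supp_diff_subset_iff_clear_coords_eq:
  fixes u v :: "'a::ab_group_add ^ 'n"
  shows "supp (u - v) \<subseteq> J \<longleftrightarrow> clear_coords J u = clear_coords J v"
  by (auto simp: supp_def clear_coords_def vec_eq_iff)

lemma card_subspace_le_subcode_on:
  fixes C :: "('a::{finite,field} ^ 'n::finite) set"
  assumes sub: "vec.subspace C"
  shows "card C \<le> card (subcode_on C J) * CARD('a) ^ (CARD('n) - card J)"
proof -
  let ?Z = "clear_coords J :: 'a^'n \<Rightarrow> 'a^'n"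
  have fibre: "card {u\<in>C. ?Z u = w} \<le> card (subcode_on C J)" if "w \<in> ?Z ` C" for w
  proof -
    from that obtain a where a: "a \<in> C" "w = ?Z a" by blast
    have "(\<lambda>u. u - a) ` {u\<in>C. ?Z u = w} \<subseteq> subcode_on C J"
      using a sub vec.subspace_diff supp_diff_subset_iff_clear_coords_eq
      by (fastforce simp: subcode_on_def)
    moreover have "inj_on (\<lambda>u. u - a) {u\<in>C. ?Z u = w}" by (rule inj_onI) simp
    ultimately show ?thesis by (intro card_inj_on_le) auto
  qed
  have "card C \<le> (\<Sum>w\<in>?Z ` C. card {u\<in>C. ?Z u = w})"
    by (subst card_UN_disjoint[symmetric]) (auto intro!: card_mono)
  also have "\<dots> \<le> card (?Z ` C) * card (subcode_on C J)"
    using sum_bounded_above[of "?Z ` C" _ "card (subcode_on C J)"] fibre by simp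
  also have "card (?Z ` C) \<le> card {v :: 'a ^ 'n. supp v \<subseteq> - J}"
    by (rule card_mono) (auto simp: clear_coords_def supp_def)
  also have "\<dots> = CARD('a) ^ (CARD('n) - card J)"
    by (simp add: card_supp_subset Compl_eq_Diff_UNIV card_Diff_subset)
  finally show ?thesis by (simp add: mult.commute)
qed

lemma card_subcode_on_le:
  fixes C :: "('a::{finite,field} ^ 'n::finite) set"
  assumes sub: "vec.subspace C" and "J' \<subseteq> J" and trivial: "subcode_on C J' = {0}"
  shows "card (subcode_on C J) \<le> CARD('a) ^ (card J - card J')"
proof -
  let ?Z = "clear_coords J' :: 'a^'n \<Rightarrow> 'a^'n"
  have "inj_on ?Z (subcode_on C J)"
  proof (rule inj_onI)
    fix u v assume "u \<in> subcode_on C J" "v \<in> subcode_on C J" and eq: "?Z u = ?Z v"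
    then have "u - v \<in> subcode_on C J'"
      using sub vec.subspace_diff eq[folded supp_diff_subset_iff_clear_coords_eq]
      by (auto simp: subcode_on_def)
    with trivial show "u = v" by simp
  qed
  moreover have "?Z ` subcode_on C J \<subseteq> {v. supp v \<subseteq> J - J'}"
    by (auto simp: subcode_on_def clear_coords_def supp_def split: if_split_asm)
  ultimately have "card (subcode_on C J) \<le> card {v :: 'a ^ 'n. supp v \<subseteq> J - J'}"
    by (intro card_inj_on_le) auto
  also have "\<dots> = CARD('a) ^ (card J - card J')"
    using assms(2) by (simp add: card_supp_subset card_Diff_subset)
  finally show ?thesis .
qed

locale mds_poset_code =
  fixes P :: "('n::finite \<times> 'n) set"
    and C :: "('a::{finite,field} ^ 'n) set"
    and k d :: nat
  assumes po: "partial_order_on UNIV P"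
    and sub: "vec.subspace C"
    and dim_C: "vec.dim C = k"
    and d_eq: "d = CARD('n) - k + 1"
    and min_pweight_eq: "min_pweight P C = d"
begin

lemma card_code: "card C = CARD('a) ^ k"
  using card_subspace[OF sub] dim_C by simp

lemma dim_le_length: "k \<le> CARD('n)"
proof -
  have "card C \<le> card {v :: 'a ^ 'n. supp v \<subseteq> UNIV}" by (rule card_mono) auto
  then have "CARD('a) ^ k \<le> CARD('a) ^ CARD('n)" using card_code card_supp_subset[of UNIV] by simp
  then show ?thesis using card_field_ge_2[where 'a='a] by (simp add: power_le_imp_le_exp)
qed

lemma pweight_ge: "u \<in> C \<Longrightarrow> u \<noteq> 0 \<Longrightarrow> d \<le> pweight P u"
  using Min_le[of "{pweight P u | u. u \<in> C \<and> u \<noteq> 0}" "pweight P u"] min_pweight_eq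
  unfolding min_pweight_def by (auto intro: finite_subset[of _ "range (pweight P)"])

lemma subcode_on_small_ideal:
  assumes J: "is_ideal P J" and "card J < d"
  shows "subcode_on C J = {0}"
proof -
  have "u = 0" if u: "u \<in> C" "supp u \<subseteq> J" for u
  proof (rule ccontr)
    assume "u \<noteq> 0"
    with u(1) have "d \<le> pweight P u" by (rule pweight_ge)
    moreover have "pweight P u \<le> card J"
      unfolding pweight_def using ideal_hull_least[OF J u(2)] by (intro card_mono) auto
    ultimately show False using \<open>card J < d\<close> by simp
  qed
  moreover have "0 \<in> C" using sub vec.subspace_0 by blast
  ultimately show ?thesis by (auto simp: subcode_on_def supp_def)
qed

lemma card_subcode_on_ideal:
  assumes J: "is_ideal P J"
  shows "card (subcode_on C J) = CARD('a) ^ (card J - (CARD('n) - k))"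
proof (cases "card J < d")
  case True
  then show ?thesis using subcode_on_small_ideal[OF J] d_eq by simp
next
  case False
  let ?q = "CARD('a)"
  let ?e = "card J - (CARD('n) - k)"
  from False have "CARD('n) - k \<le> card J" using d_eq by simp
  then obtain J' where J': "J' \<subseteq> J" "is_ideal P J'" "card J' = CARD('n) - k"
    using exists_subideal_of_card[OF po J] by blast
  have upper: "card (subcode_on C J) \<le> ?q ^ ?e"
    using card_subcode_on_le[OF sub J'(1)] subcode_on_small_ideal[OF J'(2)] J'(3) d_eq by simp
  have "card J \<le> CARD('n)" by (rule card_mono) auto
  then have "?q ^ ?e * ?q ^ (CARD('n) - card J) = ?q ^ k"
    using \<open>CARD('n) - k \<le> card J\<close> dim_le_length by (simp add: power_add[symmetric])
  with card_subspace_le_subcode_on[OF sub, of J] card_code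
  have "?q ^ ?e * ?q ^ (CARD('n) - card J) \<le> card (subcode_on C J) * ?q ^ (CARD('n) - card J)"
    by simp
  then have "?q ^ ?e \<le> card (subcode_on C J)" by simp
  with upper show ?thesis by simp
qed

lemma card_subcode_on_covering:
  assumes "finite T"
  shows "is_ideal P A \<Longrightarrow> T \<subseteq> maximal_elems P A \<Longrightarrow>
    int (card {u\<in>subcode_on C A. T \<subseteq> supp u}) =
      alternating_binomial_sum (int CARD('a)) (card T) (card A - (CARD('n) - k))"
  using assms
proof (induction T arbitrary: A rule: finite_induct)
  case empty
  then show ?case using card_subcode_on_ideal[OF empty.prems(1)] by simp
next
  case (insert m T)
  let ?cover = "\<lambda>A. {u\<in>subcode_on C A. T \<subseteq> supp u}"
  have m: "m \<in> maximal_elems P A" using insert.prems(2) by simp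
  then have "m \<in> A" by (simp add: maximal_elems_def)
  have "{u\<in>subcode_on C A. insert m T \<subseteq> supp u} = ?cover A - ?cover (A - {m})"
    by (auto simp: subcode_on_def supp_def)
  moreover have "?cover (A - {m}) \<subseteq> ?cover A" by (auto simp: subcode_on_def)
  moreover have "int (card (?cover A)) =
      alternating_binomial_sum (int CARD('a)) (card T) (card A - (CARD('n) - k))"
    using insert.IH[OF insert.prems(1)] insert.prems(2) by simp
  moreover have "int (card (?cover (A - {m}))) =
      alternating_binomial_sum (int CARD('a)) (card T) (card A - (CARD('n) - k) - 1)"
    using insert.IH[OF is_ideal_Diff_maximal_elem[OF po insert.prems(1) m]]
      maximal_elems_Diff[of T P A m] insert.prems(2) insert.hyps(2) \<open>m \<in> A\<close> by simp
  ultimately show ?case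
    using insert.hyps by (simp add: alternating_binomial_sum_Suc card_Diff_subset card_mono of_nat_diff)
qed

lemma card_ideal_hull_supp_eq:
  assumes I: "I \<in> ideals_of_size P r" and "d \<le> r"
  shows "int (card {u\<in>C. ideal_hull P (supp u) = I}) =
    (\<Sum>s=0..r-d. (-1)^s * int (card (maximal_elems P I) choose s) * (int (CARD('a)) ^ (r - d + 1 - s) - 1))"
proof -
  from I have ideal: "is_ideal P I" and "card I = r" by (auto simp: ideals_of_size_def)
  then obtain i where "i \<in> I" using \<open>d \<le> r\<close> d_eq by fastforce
  then have "maximal_elems P I \<noteq> {}" using exists_maximal_elem_above[OF po] by blast
  then have "1 \<le> card (maximal_elems P I)" by (simp add: Suc_le_eq card_gt_0_iff)
  have "{u\<in>C. ideal_hull P (supp u) = I} = {u\<in>subcode_on C I. maximal_elems P I \<subseteq> supp u}"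
    using ideal_hull_eq_iff[OF po ideal] by (auto simp: subcode_on_def)
  moreover have "card I - (CARD('n) - k) = r - d + 1"
    using \<open>card I = r\<close> \<open>d \<le> r\<close> d_eq dim_le_length by simp
  ultimately show ?thesis
    using card_subcode_on_covering[OF _ ideal] alternating_binomial_sum_eq_minus_one
      \<open>1 \<le> card (maximal_elems P I)\<close> by simp
qed

lemma weight_count_eq:
  assumes "d \<le> r"
  shows "int (weight_count r P C) =
    (\<Sum>I\<in>ideals_of_size P r. \<Sum>s=0..r-d.
       (-1)^s * int (card (maximal_elems P I) choose s) * (int (CARD('a)) ^ (r - d + 1 - s) - 1))"
proof -
  have partition:
    "{u\<in>C. pweight P u = r} = (\<Union>I\<in>ideals_of_size P r. {u\<in>C. ideal_hull P (supp u) = I})"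
    unfolding ideals_of_size_def pweight_def using is_ideal_ideal_hull[OF po] by auto
  have "card {u\<in>C. pweight P u = r} =
      (\<Sum>I\<in>ideals_of_size P r. card {u\<in>C. ideal_hull P (supp u) = I})"
    unfolding partition by (rule card_UN_disjoint) auto
  then show ?thesis
    unfolding weight_count_def using card_ideal_hull_supp_eq[OF _ assms] by simp
qed

end

theorem theorem4:
  fixes P :: "('n::finite \<times> 'n) set"
    and C :: "('a::{finite,field} ^ 'n) set"
    and k d r :: nat
  assumes "partial_order_on UNIV P"
    and "vec.subspace C"
    and "vec.dim C = k"
    and "d = CARD('n) - k + 1"
    and "min_pweight P C = d"
    and "d \<le> r" and "r \<le> CARD('n)"
  shows "int (weight_count r P C) =
    (\<Sum>I\<in>ideals_of_size P r. \<Sum>s=0..r-d.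
       (-1)^s * int (card (maximal_elems P I) choose s) * (int (CARD('a)) ^ (r - d + 1 - s) - 1))"
proof -
  interpret mds_poset_code P C k d
    using assms(1-5) by unfold_locales
  show ?thesis using weight_count_eq[OF assms(6)] .
qed

end
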